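(* Let $H$ be a Hermitian operator on a $d$-dimensional Hilbert space with spectral decomposition $H=\sum_{i=1}^M\lambda_i\Pi_i$, where $\lambda_M>\cdots>\lambda_1$ are the distinct eigenvalues and $\Pi_i$ the spectral projections ($\Pi_i\Pi_j=\delta_{ij}\Pi_i$, $\sum_i\Pi_i=I$), and let $\beta\ge 0$. Write $\gamma=\frac{\Pi_1}{\operatorname{Tr}[\Pi_1]}$ and $\tau_\beta=\frac{e^{-\beta H}}{\operatorname{Tr}[e^{-\beta H}]}$. Then $$\frac{1}{2}\|\tau_\beta-\gamma\|_1=1-F(\tau_\beta,\gamma)\qquad\text{and}\qquad D(\gamma\|\tau_\beta)=-\ln F(\tau_\beta,\gamma).$$
   Context: $\|A\|_1=\operatorname{Tr}[\sqrt{A^\dagger A}]$; $F(\rho,\sigma)=\|\sqrt{\rho}\sqrt{\sigma}\|_1^2$ is the fidelity; $D(\rho\|\sigma)=\operatorname{Tr}[\rho(\ln\rho-\ln\sigma)]$ is the quantum relative entropy. *)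

theory Defs
  imports "Jordan_Normal_Form.Schur_Decomposition" Complex_Main
begin

definition mtrace :: "complex mat \<Rightarrow> complex" where
  "mtrace A = (\<Sum>i<dim_row A. A $$ (i,i))"

definition hermitian :: "complex mat \<Rightarrow> bool" where
  "hermitian A \<longleftrightarrow> square_mat A \<and> mat_adjoint A = A"

definition unitary :: "nat \<Rightarrow> complex mat \<Rightarrow> bool" where
  "unitary n U \<longleftrightarrow> U \<in> carrier_mat n n \<and> U * mat_adjoint U = 1\<^sub>m n \<and> mat_adjoint U * U = 1\<^sub>m n"

definition msum :: "nat \<Rightarrow> 'i set \<Rightarrow> ('i \<Rightarrow> complex mat) \<Rightarrow> complex mat" where
  "msum n I f = mat n n (\<lambda>(r,c). \<Sum>i\<in>I. f i $$ (r,c))"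

definition mfun :: "(real \<Rightarrow> real) \<Rightarrow> complex mat \<Rightarrow> complex mat" where
  "mfun f A = (SOME B. \<exists>U (l :: nat \<Rightarrow> real). unitary (dim_row A) U \<and>
      A = U * mat_diag (dim_row A) (\<lambda>k. complex_of_real (l k)) * mat_adjoint U \<and>
      B = U * mat_diag (dim_row A) (\<lambda>k. complex_of_real (f (l k))) * mat_adjoint U)"

definition trace_norm :: "complex mat \<Rightarrow> real" where
  "trace_norm A = Re (mtrace (mfun sqrt (mat_adjoint A * A)))"

definition fidelity :: "complex mat \<Rightarrow> complex mat \<Rightarrow> real" where
  "fidelity \<rho> \<sigma> = (trace_norm (mfun sqrt \<rho> * mfun sqrt \<sigma>))\<^sup>2"

text \<open>Quantum relative entropy D(rho||sigma) = Tr[rho (ln rho - ln sigma)];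
  Isabelle's ln 0 = 0 implements the convention 0 ln 0 = 0 on the kernel of rho.\<close>
definition rel_entropy :: "complex mat \<Rightarrow> complex mat \<Rightarrow> real" where
  "rel_entropy \<rho> \<sigma> = Re (mtrace (\<rho> * (mfun ln \<rho> - mfun ln \<sigma>)))"

end

theory Submission
  imports Defs
begin

text \<open>
  Both states are real combinations of the spectral projections: with \<open>t\<^sub>i = Tr \<Pi>\<^sub>i\<close>,
  \<open>w\<^sub>i = exp (-\<beta> \<lambda>\<^sub>i)\<close> and \<open>Z = \<Sum>\<^sub>i w\<^sub>i t\<^sub>i\<close> we have
  \<open>\<tau> = \<Sum>\<^sub>i (w\<^sub>i / Z) \<Pi>\<^sub>i\<close> and \<open>\<gamma> = \<Pi>\<^sub>1 / t\<^sub>1\<close>.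
  On such commuting combinations the trace norm, the fidelity and the relative entropy reduce to
  their classical counterparts for the probabilities \<open>p\<^sub>i = w\<^sub>i t\<^sub>i / Z\<close>, and against the
  point mass at \<open>1\<close> these are \<open>2 (1 - p\<^sub>1)\<close>, \<open>p\<^sub>1\<close> and \<open>- ln p\<^sub>1\<close>.

  To evaluate the functional calculus on \<open>\<Sum>\<^sub>i c\<^sub>i \<Pi>\<^sub>i\<close> it suffices that
  \<open>f(A) X = f(x) X\<close> whenever \<open>A X = x X\<close>: for a unitary diagonalisation \<open>A = U D U\<^sup>*\<close>
  (the spectral theorem, proved by splitting off a unit eigenvector) the matrix \<open>U\<^sup>* X\<close>
  intertwines \<open>D\<close> with the scalar \<open>x\<close>, and therefore also \<open>f(D)\<close> with \<open>f(x)\<close>.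
\<close>

lemma mat_adjoint_altdef:
  "mat_adjoint A = mat (dim_col A) (dim_row A) (\<lambda>(i,j). conjugate (A $$ (j,i)))"
  by (rule eq_matI) (auto simp: mat_adjoint_def mat_of_rows_def)

lemma mat_adjoint_dim [simp]:
  "dim_row (mat_adjoint A) = dim_col A" "dim_col (mat_adjoint A) = dim_row A"
  by (simp_all add: mat_adjoint_def mat_of_rows_def)

lemma mat_adjoint_carrier [simp]: "A \<in> carrier_mat n m \<Longrightarrow> mat_adjoint A \<in> carrier_mat m n"
  by (intro carrier_matI) auto

lemma mat_adjoint_index [simp]:
  "i < dim_col A \<Longrightarrow> j < dim_row A \<Longrightarrow> mat_adjoint A $$ (i,j) = conjugate (A $$ (j,i))"
  by (simp add: mat_adjoint_altdef)

lemma mat_adjoint_adjoint [simp]: "mat_adjoint (mat_adjoint A) = A"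
  by (rule eq_matI) auto

lemma mat_adjoint_smult: "mat_adjoint (a \<cdot>\<^sub>m A) = conjugate a \<cdot>\<^sub>m mat_adjoint A"
  by (rule eq_matI) (auto simp: conjugate_dist_mul)

lemma mat_adjoint_mult:
  assumes "A \<in> carrier_mat n m" "B \<in> carrier_mat m k"
  shows "mat_adjoint (A * B) = mat_adjoint B * mat_adjoint A"
  using assms
  by (intro eq_matI) (auto simp: scalar_prod_def sum_conjugate conjugate_dist_mul mult.commute intro!: sum.cong)

lemma mat_adjoint_zero [simp]: "mat_adjoint (0\<^sub>m n m) = 0\<^sub>m m n"
  by (rule eq_matI) auto

lemma mat_adjoint_one [simp]: "mat_adjoint (1\<^sub>m n) = (1\<^sub>m n :: complex mat)"
  by (rule eq_matI) auto

lemma mat_adjoint_four_block_mat: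
  assumes "A \<in> carrier_mat n1 m1" "B \<in> carrier_mat n1 m2" "C \<in> carrier_mat n2 m1" "D \<in> carrier_mat n2 m2"
  shows "mat_adjoint (four_block_mat A B C D)
    = four_block_mat (mat_adjoint A) (mat_adjoint C) (mat_adjoint B) (mat_adjoint D)"
  using assms by (intro eq_matI) auto

lemma msum_carrier [simp]: "msum n I f \<in> carrier_mat n n"
  and msum_dim [simp]: "dim_row (msum n I f) = n" "dim_col (msum n I f) = n"
  by (simp_all add: msum_def)

lemma msum_index [simp]: "i < n \<Longrightarrow> j < n \<Longrightarrow> msum n I f $$ (i,j) = (\<Sum>k\<in>I. f k $$ (i,j))"
  by (simp add: msum_def)

lemma msum_cong: "(\<And>i. i \<in> I \<Longrightarrow> f i = g i) \<Longrightarrow> msum n I f = msum n I g"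
  unfolding msum_def by (auto intro!: sum.cong)

lemma msum_mult_left:
  assumes "X \<in> carrier_mat n n" "\<And>i. i \<in> I \<Longrightarrow> f i \<in> carrier_mat n n"
  shows "X * msum n I f = msum n I (\<lambda>i. X * f i)"
  using assms assms(2)[THEN carrier_matD(1)] assms(2)[THEN carrier_matD(2)]
  by (intro eq_matI) (auto simp: scalar_prod_def sum_distrib_left sum.swap[of _ I] intro!: sum.cong)

lemma msum_mult_right:
  assumes "X \<in> carrier_mat n n" "\<And>i. i \<in> I \<Longrightarrow> f i \<in> carrier_mat n n"
  shows "msum n I f * X = msum n I (\<lambda>i. f i * X)"
  using assms assms(2)[THEN carrier_matD(1)] assms(2)[THEN carrier_matD(2)]
  by (intro eq_matI) (auto simp: scalar_prod_def sum_distrib_right sum.swap[of _ I] intro!: sum.cong)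

lemma msum_smult:
  assumes "\<And>i. i \<in> I \<Longrightarrow> f i \<in> carrier_mat n n"
  shows "a \<cdot>\<^sub>m msum n I f = msum n I (\<lambda>i. a \<cdot>\<^sub>m f i)"
  using assms[THEN carrier_matD(1)] assms[THEN carrier_matD(2)]
  by (intro eq_matI) (auto simp: sum_distrib_left intro!: sum.cong)

lemma msum_diff:
  assumes "\<And>i. i \<in> I \<Longrightarrow> g i \<in> carrier_mat n n"
  shows "msum n I f - msum n I g = msum n I (\<lambda>i. f i - g i)"
  using assms[THEN carrier_matD(1)] assms[THEN carrier_matD(2)]
  by (intro eq_matI) (auto simp: sum_subtractf intro!: sum.cong)

lemma mat_adjoint_msum:
  assumes "\<And>i. i \<in> I \<Longrightarrow> f i \<in> carrier_mat n n"
  shows "mat_adjoint (msum n I f) = msum n I (\<lambda>i. mat_adjoint (f i))"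
  using assms[THEN carrier_matD(1)] assms[THEN carrier_matD(2)]
  by (intro eq_matI) (auto intro!: sum.cong)

lemma msum_single:
  assumes "finite I" "j \<in> I" "X \<in> carrier_mat n n"
  shows "msum n I (\<lambda>i. if i = j then X else 0\<^sub>m n n) = X"
proof (rule eq_matI)
  fix r c assume rc: "r < dim_row X" "c < dim_col X"
  have "(\<Sum>i\<in>I. (if i = j then X else 0\<^sub>m n n) $$ (r,c)) = (\<Sum>i\<in>I. if i = j then X $$ (r,c) else 0)"
    using assms rc by (intro sum.cong) auto
  with assms rc show "msum n I (\<lambda>i. if i = j then X else 0\<^sub>m n n) $$ (r,c) = X $$ (r,c)" by simp
qed (use assms in auto)

lemma mtrace_msum:
  assumes "\<And>i. i \<in> I \<Longrightarrow> f i \<in> carrier_mat n n"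
  shows "mtrace (msum n I f) = (\<Sum>i\<in>I. mtrace (f i))"
  using assms unfolding mtrace_def by (auto simp: sum.swap[of _ I] intro!: sum.cong)

lemma mtrace_smult: "A \<in> carrier_mat n n \<Longrightarrow> mtrace (a \<cdot>\<^sub>m A) = a * mtrace A"
  unfolding mtrace_def by (simp add: sum_distrib_left)

lemma mtrace_adjoint_mult_self:
  assumes "A \<in> carrier_mat n m"
  shows "mtrace (mat_adjoint A * A) = complex_of_real (\<Sum>i<m. \<Sum>k<n. (cmod (A $$ (k,i)))\<^sup>2)"
  unfolding of_real_sum complex_norm_square using assms
  by (simp add: mtrace_def scalar_prod_def atLeast0LessThan mult.commute)

section \<open>Unitary matrices\<close>

lemma unitaryD:
  assumes "unitary n U"
  shows "U \<in> carrier_mat n n" "mat_adjoint U \<in> carrier_mat n n"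
    "U * mat_adjoint U = 1\<^sub>m n" "mat_adjoint U * U = 1\<^sub>m n"
  using assms by (auto simp: unitary_def)

lemma unitaryI:
  assumes "U \<in> carrier_mat n n" "mat_adjoint U * U = 1\<^sub>m n"
  shows "unitary n U"
  using assms mat_mult_left_right_inverse[of "mat_adjoint U" n U] by (auto simp: unitary_def)

lemma unitary_cancel:
  assumes "unitary n U" "X \<in> carrier_mat n k"
  shows "mat_adjoint U * (U * X) = X" "U * (mat_adjoint U * X) = X"
  using unitaryD[OF assms(1)] assms(2)
  by (simp_all flip: assoc_mult_mat[of _ n n _ n _ k])

lemma unitary_mult:
  assumes "unitary n U" "unitary n V"
  shows "unitary n (U * V)"
proof (rule unitaryI)
  note U = unitaryD[OF assms(1)] and V = unitaryD[OF assms(2)]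
  show "U * V \<in> carrier_mat n n" using U V by simp
  show "mat_adjoint (U * V) * (U * V) = 1\<^sub>m n"
    using U V unitary_cancel(1)[OF assms(1), of V n]
    by (simp add: mat_adjoint_mult[of _ n n _ n] assoc_mult_mat[of _ n n _ n _ n])
qed

lemma unitary_one: "unitary n (1\<^sub>m n)"
  by (rule unitaryI) (use mat_adjoint_one[of n] in \<open>metis right_mult_one_mat one_carrier_mat\<close>)+

lemma mult_four_block_diag_mat:
  assumes "A1 \<in> carrier_mat n n" "A2 \<in> carrier_mat n n" "D1 \<in> carrier_mat m m" "D2 \<in> carrier_mat m m"
  shows "four_block_mat A1 (0\<^sub>m n m) (0\<^sub>m m n) D1 * four_block_mat A2 (0\<^sub>m n m) (0\<^sub>m m n) D2
    = four_block_mat (A1 * A2) (0\<^sub>m n m) (0\<^sub>m m n) (D1 * D2)"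
  using assms by (simp add: mult_four_block_mat[of _ n n _ m _ m _ _ n _ m])

lemma unitary_four_block_mat:
  assumes U: "unitary n U" and V: "unitary m V"
  shows "unitary (n + m) (four_block_mat U (0\<^sub>m n m) (0\<^sub>m m n) V)"
proof (rule unitaryI)
  note U' = unitaryD[OF U] and V' = unitaryD[OF V]
  show "four_block_mat U (0\<^sub>m n m) (0\<^sub>m m n) V \<in> carrier_mat (n + m) (n + m)"
    using U' V' by simp
  show "mat_adjoint (four_block_mat U (0\<^sub>m n m) (0\<^sub>m m n) V) * four_block_mat U (0\<^sub>m n m) (0\<^sub>m m n) V
    = 1\<^sub>m (n + m)"
    using U' V' by (simp add: mat_adjoint_four_block_mat[of _ n n _ m _ m] mult_four_block_diag_mat)
qed

definition vec_normalize :: "complex vec \<Rightarrow> complex vec" where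
  "vec_normalize v = (1 / complex_of_real (sqrt (Re (v \<bullet>c v)))) \<cdot>\<^sub>v v"

lemma vec_normalize_carrier [simp]: "v \<in> carrier_vec n \<Longrightarrow> vec_normalize v \<in> carrier_vec n"
  by (simp add: vec_normalize_def)

lemma cscalar_prod_smult:
  assumes "(v :: complex vec) \<in> carrier_vec n" "w \<in> carrier_vec n"
  shows "(a \<cdot>\<^sub>v v) \<bullet>c (b \<cdot>\<^sub>v w) = a * cnj b * (v \<bullet>c w)"
  using assms by (simp add: scalar_prod_def sum_distrib_left algebra_simps)

lemma cscalar_prod_self_real:
  assumes "(v :: complex vec) \<in> carrier_vec n"
  shows "v \<bullet>c v = complex_of_real (Re (v \<bullet>c v))" "Re (v \<bullet>c v) \<ge> 0"
  using conjugate_square_ge_0_vec[of v] by (auto simp: less_eq_complex_def complex_eq_iff)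

lemma vec_normalize_norm:
  assumes "v \<in> carrier_vec n" "v \<noteq> 0\<^sub>v n"
  shows "vec_normalize v \<bullet>c vec_normalize v = 1"
proof -
  define r where "r = Re (v \<bullet>c v)"
  have r: "v \<bullet>c v = complex_of_real r" "r \<ge> 0" unfolding r_def using cscalar_prod_self_real assms(1) by auto
  with assms have "r \<noteq> 0" by auto
  with r show ?thesis
    unfolding vec_normalize_def cscalar_prod_smult[OF assms(1) assms(1)] r_def[symmetric]
    by (simp add: field_simps flip: of_real_mult)
qed

lemma vec_normalize_orthogonal:
  assumes "v \<in> carrier_vec n" "w \<in> carrier_vec n" "v \<bullet>c w = 0"
  shows "vec_normalize v \<bullet>c vec_normalize w = 0"
  unfolding vec_normalize_def cscalar_prod_smult[OF assms(1,2)] by (simp add: assms(3))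

lemma unitary_mat_of_cols:
  assumes ws: "set ws \<subseteq> carrier_vec n" "length ws = n"
    and orthonormal: "\<And>i j. i < n \<Longrightarrow> j < n \<Longrightarrow> ws ! i \<bullet>c ws ! j = (if i = j then 1 else 0)"
  shows "unitary n (mat_of_cols n ws)"
proof (rule unitaryI)
  let ?W = "mat_of_cols n ws"
  show W: "?W \<in> carrier_mat n n" using ws by auto
  show "mat_adjoint ?W * ?W = 1\<^sub>m n"
  proof (rule eq_matI)
    fix i j assume "i < dim_row (1\<^sub>m n)" "j < dim_col (1\<^sub>m n)"
    then have ij: "i < n" "j < n" by auto
    then have "ws ! i \<in> carrier_vec n" "ws ! j \<in> carrier_vec n" using ws by auto
    with ij W ws have "(mat_adjoint ?W * ?W) $$ (i,j) = ws ! j \<bullet>c ws ! i"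
      by (simp add: scalar_prod_def mat_of_cols_index mult.commute)
    then show "(mat_adjoint ?W * ?W) $$ (i,j) = 1\<^sub>m n $$ (i,j)" using orthonormal[OF ij(2,1)] ij by auto
  qed (use W in auto)
qed

lemma unit_vec_extends_to_unitary:
  assumes u: "u \<in> carrier_vec n" "u \<bullet>c u = 1"
  obtains W where "unitary n W" "col W 0 = u"
proof -
  interpret cof_vec_space n "TYPE(complex)" .
  have u0: "u \<noteq> 0\<^sub>v n" using u by auto
  then have "n \<noteq> 0" using u(1) by auto
  define b where "b = basis_completion u"
  have b: "set b \<subseteq> carrier_vec n" "distinct b" "\<not> lin_dep (set b)" "length b = n" "hd b = u"
    using basis_completion[OF u(1) u0] unfolding b_def by auto
  then obtain vs where bv: "b = u # vs" using \<open>n \<noteq> 0\<close> by (cases b) auto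
  define ws where "ws = gram_schmidt n b"
  have ws: "set ws \<subseteq> carrier_vec n" "corthogonal ws" "length ws = n"
    using gram_schmidt_result[OF b(1-3) ws_def] b(4) by auto
  have "hd ws = u" unfolding ws_def bv using gram_schmidt_hd[OF u(1)] by blast
  define ws' where "ws' = map vec_normalize ws"
  have ws': "set ws' \<subseteq> carrier_vec n" "length ws' = n" using ws unfolding ws'_def by auto
  have "ws' ! i \<bullet>c ws' ! j = (if i = j then 1 else 0)" if "i < n" "j < n" for i j
  proof -
    have "ws ! i \<in> carrier_vec n" "ws ! j \<in> carrier_vec n" using ws that by auto
    moreover have "(ws ! i \<bullet>c ws ! j = 0) = (i \<noteq> j)" using corthogonalD[OF ws(2)] that ws(3) by auto
    ultimately show ?thesis
      using vec_normalize_norm[of "ws ! i" n] vec_normalize_orthogonal[of "ws ! i" n "ws ! j"] that ws(3)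
      by (auto simp: ws'_def)
  qed
  then have "unitary n (mat_of_cols n ws')" using unitary_mat_of_cols[OF ws'] by blast
  \<comment> \<open>Gram-Schmidt keeps the first vector, which normalisation then fixes as it is a unit vector.\<close>
  moreover have "col (mat_of_cols n ws') 0 = u"
    using ws ws' \<open>n \<noteq> 0\<close> \<open>hd ws = u\<close> vec_normalize_def u
    by (cases ws) (auto simp: ws'_def)
  ultimately show ?thesis using that by blast
qed

section \<open>The spectral theorem for Hermitian matrices\<close>

lemma unit_eigenvector_exists:
  fixes A :: "complex mat"
  assumes A: "A \<in> carrier_mat n n" and "n > 0"
  obtains e u where "u \<in> carrier_vec n" "u \<bullet>c u = 1" "A *\<^sub>v u = e \<cdot>\<^sub>v u"
proof -
  obtain es where cp: "char_poly A = (\<Prod>a\<leftarrow>es. [:- a, 1:])" and "length es = n"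
    using char_poly_factorized[OF A] by blast
  with \<open>n > 0\<close> obtain e es' where "es = e # es'" by (cases es) auto
  then have "eigenvalue A e" unfolding eigenvalue_root_char_poly[OF A] cp by simp
  then obtain v where v: "v \<in> carrier_vec n" "v \<noteq> 0\<^sub>v n" "A *\<^sub>v v = e \<cdot>\<^sub>v v"
    using A unfolding eigenvalue_def eigenvector_def by auto
  show ?thesis
  proof
    show "vec_normalize v \<in> carrier_vec n" "vec_normalize v \<bullet>c vec_normalize v = 1"
      using v vec_normalize_norm by auto
    show "A *\<^sub>v vec_normalize v = e \<cdot>\<^sub>v vec_normalize v"
      using v A by (simp add: vec_normalize_def mult_mat_vec smult_smult_assoc mult.commute)
  qed
qed

lemma unitary_conj_first_col:
  assumes W: "unitary n W" and A: "A \<in> carrier_mat n n"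
    and u: "col W 0 = u" "A *\<^sub>v u = e \<cdot>\<^sub>v u" and i: "i < n"
  shows "(mat_adjoint W * (A * W)) $$ (i,0) = (if i = 0 then e else 0)"
proof -
  note W' = unitaryD[OF W]
  have "col (A * W) 0 = A *\<^sub>v col W 0"
    using A W'(1) i by (intro col_mult2) auto
  then have "col (A * W) 0 = e \<cdot>\<^sub>v col W 0"
    unfolding u .
  then have "(mat_adjoint W * (A * W)) $$ (i,0) = row (mat_adjoint W) i \<bullet> (e \<cdot>\<^sub>v col W 0)"
    using i W'(1,2) A by simp
  also have "\<dots> = e * (mat_adjoint W * W) $$ (i,0)"
    using i W'(1,2) by simp
  finally show ?thesis using W'(4) i by simp
qed

lemma hermitian_first_col_block:
  fixes B :: "complex mat"
  assumes B: "B \<in> carrier_mat (Suc m) (Suc m)" "mat_adjoint B = B"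
    and col0: "\<And>i. i < Suc m \<Longrightarrow> B $$ (i,0) = (if i = 0 then e else 0)"
  defines "C \<equiv> mat m m (\<lambda>(i,j). B $$ (Suc i, Suc j))"
  shows "B = four_block_mat (mat 1 1 (\<lambda>_. complex_of_real (Re e))) (0\<^sub>m 1 m) (0\<^sub>m m 1) C"
    and "mat_adjoint C = C"
proof -
  have adj: "B $$ (j,i) = cnj (B $$ (i,j))" if "i < Suc m" "j < Suc m" for i j
    using mat_adjoint_index[of j B i] B that by simp
  have "e = cnj e" using adj[of 0 0] col0[of 0] by simp
  then have "Im e = 0" using complex_is_Real_iff Reals_cnj_iff by metis
  then have e: "e = complex_of_real (Re e)" by (simp add: complex_eq_iff)
  let ?E = "mat 1 1 (\<lambda>_. complex_of_real (Re e))"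
  show "B = four_block_mat ?E (0\<^sub>m 1 m) (0\<^sub>m m 1) C"
  proof (rule eq_matI)
    fix i j assume "i < dim_row (four_block_mat ?E (0\<^sub>m 1 m) (0\<^sub>m m 1) C)"
      "j < dim_col (four_block_mat ?E (0\<^sub>m 1 m) (0\<^sub>m m 1) C)"
    then have ij: "i < Suc m" "j < Suc m" by (auto simp: C_def)
    show "B $$ (i,j) = four_block_mat ?E (0\<^sub>m 1 m) (0\<^sub>m m 1) C $$ (i,j)"
    proof (cases "i = 0 \<or> j = 0")
      case True
      then show ?thesis using ij col0[OF ij(1)] col0[OF ij(2)] adj[of 0 j] e by (auto simp: C_def)
    next
      case False
      then obtain i' j' where "i = Suc i'" "j = Suc j'" by (metis not0_implies_Suc)
      then show ?thesis using ij by (simp add: C_def)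
    qed
  qed (use B in \<open>auto simp: C_def\<close>)
  show "mat_adjoint C = C"
  proof (rule eq_matI)
    fix i j assume "i < dim_row C" "j < dim_col C"
    then show "mat_adjoint C $$ (i,j) = C $$ (i,j)"
      using adj[of "Suc j" "Suc i"] by (simp add: C_def)
  qed (simp_all add: C_def)
qed

lemma hermitian_deflation:
  fixes A :: "complex mat"
  assumes A: "A \<in> carrier_mat (Suc m) (Suc m)" "mat_adjoint A = A"
  obtains W e C where "unitary (Suc m) W" "C \<in> carrier_mat m m" "mat_adjoint C = C"
    "A = W * four_block_mat (mat 1 1 (\<lambda>_. complex_of_real e)) (0\<^sub>m 1 m) (0\<^sub>m m 1) C * mat_adjoint W"
proof -
  obtain e u where u: "u \<in> carrier_vec (Suc m)" "u \<bullet>c u = 1" "A *\<^sub>v u = e \<cdot>\<^sub>v u"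
    using unit_eigenvector_exists[OF A(1)] by blast
  obtain W where W: "unitary (Suc m) W" "col W 0 = u"
    using unit_vec_extends_to_unitary[OF u(1,2)] by blast
  note W' = unitaryD[OF W(1)]
  define B where "B = mat_adjoint W * (A * W)"
  have B: "B \<in> carrier_mat (Suc m) (Suc m)" unfolding B_def using A W' by (auto intro!: mult_carrier_mat)
  have B_herm: "mat_adjoint B = B"
    using A W' by (simp add: B_def mat_adjoint_mult[of _ "Suc m" "Suc m" _ "Suc m"]
        assoc_mult_mat[of _ "Suc m" "Suc m" _ "Suc m" _ "Suc m"])
  define C where "C = mat m m (\<lambda>(i,j). B $$ (Suc i, Suc j))"
  note block = hermitian_first_col_block[OF B B_herm unitary_conj_first_col[OF W(1) A(1) W(2) u(3), folded B_def],
      folded C_def]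
  have "W * B = A * W"
    unfolding B_def using unitary_cancel(2)[OF W(1), of "A * W"] A W' by (auto intro!: mult_carrier_mat)
  then have "A = W * B * mat_adjoint W"
    using A W' by (simp add: assoc_mult_mat[of _ "Suc m" "Suc m" _ "Suc m" _ "Suc m"])
  show ?thesis
  proof (rule that[OF W(1) _ block(2)])
    show "C \<in> carrier_mat m m" by (simp add: C_def)
    show "A = W * four_block_mat (mat 1 1 (\<lambda>_. complex_of_real (Re e))) (0\<^sub>m 1 m) (0\<^sub>m m 1) C * mat_adjoint W"
      using \<open>A = W * B * mat_adjoint W\<close> block(1) by simp
  qed
qed

lemma mat_diag_Suc:
  "mat_diag (Suc m) f = four_block_mat (mat 1 1 (\<lambda>_. f 0)) (0\<^sub>m 1 m) (0\<^sub>m m 1) (mat_diag m (\<lambda>k. f (Suc k)))"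
  by (rule eq_matI) (auto simp: mat_diag_def)

lemma four_block_mat_conj:
  fixes E :: "complex mat"
  assumes "E \<in> carrier_mat n n" "V \<in> carrier_mat m m" "D \<in> carrier_mat m m"
  shows "four_block_mat E (0\<^sub>m n m) (0\<^sub>m m n) (V * D * mat_adjoint V)
    = four_block_mat (1\<^sub>m n) (0\<^sub>m n m) (0\<^sub>m m n) V * four_block_mat E (0\<^sub>m n m) (0\<^sub>m m n) D
      * mat_adjoint (four_block_mat (1\<^sub>m n) (0\<^sub>m n m) (0\<^sub>m m n) V)"
  using assms by (simp add: mat_adjoint_four_block_mat[of _ n n _ m _ m] mult_four_block_diag_mat)

theorem hermitian_unitary_diagonalization:
  fixes A :: "complex mat"
  assumes "A \<in> carrier_mat n n" "mat_adjoint A = A"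
  shows "\<exists>U l. unitary n U \<and> A = U * mat_diag n (\<lambda>k. complex_of_real (l k)) * mat_adjoint U"
  using assms
proof (induction n arbitrary: A)
  case 0
  show ?case
    by (intro exI[of _ "1\<^sub>m 0"] exI[of _ "\<lambda>_. 0"] conjI unitary_one) (use 0 in \<open>auto intro!: eq_matI\<close>)
next
  case (Suc m)
  obtain W e C where W: "unitary (Suc m) W" and C: "C \<in> carrier_mat m m" "mat_adjoint C = C"
    and A: "A = W * four_block_mat (mat 1 1 (\<lambda>_. complex_of_real e)) (0\<^sub>m 1 m) (0\<^sub>m m 1) C * mat_adjoint W"
    using hermitian_deflation[OF Suc.prems] by blast
  obtain V l where V: "unitary m V" and CV: "C = V * mat_diag m (\<lambda>k. complex_of_real (l k)) * mat_adjoint V"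
    using Suc.IH[OF C] by blast
  define V' where "V' = four_block_mat (1\<^sub>m 1) (0\<^sub>m 1 m) (0\<^sub>m m 1) V"
  define l' where "l' k = (case k of 0 \<Rightarrow> e | Suc k \<Rightarrow> l k)" for k
  have V': "unitary (Suc m) V'"
    using unitary_four_block_mat[OF unitary_one V, of 1] unfolding V'_def by simp
  have "four_block_mat (mat 1 1 (\<lambda>_. complex_of_real e)) (0\<^sub>m 1 m) (0\<^sub>m m 1) C
      = V' * mat_diag (Suc m) (\<lambda>k. complex_of_real (l' k)) * mat_adjoint V'"
    unfolding CV V'_def mat_diag_Suc l'_def nat.case
    by (rule four_block_mat_conj) (use unitaryD(1)[OF V] in auto)
  then have "A = (W * V') * mat_diag (Suc m) (\<lambda>k. complex_of_real (l' k)) * mat_adjoint (W * V')"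
    using A unitaryD[OF W] unitaryD[OF V']
    by (simp add: mat_adjoint_mult[of _ "Suc m" "Suc m" _ "Suc m"] assoc_mult_mat[of _ "Suc m" "Suc m" _ "Suc m" _ "Suc m"]
        mult_carrier_mat[of _ "Suc m" "Suc m"])
  then show ?case using unitary_mult[OF W V'] by blast
qed

section \<open>Functional calculus\<close>

lemma mat_diag_intertwining_map:
  fixes a b :: "nat \<Rightarrow> 'a :: field"
  assumes X: "X \<in> carrier_mat n m" and comm: "mat_diag n a * X = X * mat_diag m b"
  shows "mat_diag n (\<lambda>k. f (a k)) * X = X * mat_diag m (\<lambda>k. f (b k))"
proof (rule eq_matI)
  fix i j assume "i < dim_row (X * mat_diag m (\<lambda>k. f (b k)))" "j < dim_col (X * mat_diag m (\<lambda>k. f (b k)))"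
  then have ij: "i < n" "j < m" using X by (auto simp: mat_diag_def)
  have "a i * X $$ (i,j) = X $$ (i,j) * b j"
    using arg_cong[OF comm, of "\<lambda>M. M $$ (i,j)"] X ij by (simp add: mat_diag_mult_left mat_diag_mult_right)
  then have "X $$ (i,j) \<noteq> 0 \<Longrightarrow> a i = b j" by simp
  then have "f (a i) * X $$ (i,j) = X $$ (i,j) * f (b j)" by (cases "X $$ (i,j) = 0") auto
  then show "(mat_diag n (\<lambda>k. f (a k)) * X) $$ (i,j) = (X * mat_diag m (\<lambda>k. f (b k))) $$ (i,j)"
    using X ij by (simp add: mat_diag_mult_left mat_diag_mult_right)
qed (use X in \<open>auto simp: mat_diag_def\<close>)

lemma mfun_unitary_diagonalization:
  assumes "A \<in> carrier_mat n n" "mat_adjoint A = A"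
  obtains U l where "unitary n U" "A = U * mat_diag n (\<lambda>k. complex_of_real (l k)) * mat_adjoint U"
    "mfun f A = U * mat_diag n (\<lambda>k. complex_of_real (f (l k))) * mat_adjoint U"
proof -
  obtain U l where "unitary n U" "A = U * mat_diag n (\<lambda>k. complex_of_real (l k)) * mat_adjoint U"
    using hermitian_unitary_diagonalization[OF assms] by blast
  then have "\<exists>B U (l :: nat \<Rightarrow> real). unitary n U
      \<and> A = U * mat_diag n (\<lambda>k. complex_of_real (l k)) * mat_adjoint U
      \<and> B = U * mat_diag n (\<lambda>k. complex_of_real (f (l k))) * mat_adjoint U"
    by blast
  from someI_ex[OF this] show ?thesis
    using that assms(1) unfolding mfun_def by auto
qed

lemma mult_mat_diag_const:
  "X \<in> carrier_mat n m \<Longrightarrow> X * mat_diag m (\<lambda>_. c) = c \<cdot>\<^sub>m (X :: 'a :: comm_ring_1 mat)"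
  by (rule eq_matI) (auto simp: mat_diag_mult_right mult.commute)

lemma mfun_mult_eigen:
  assumes A: "A \<in> carrier_mat n n" "mat_adjoint A = A" and X: "X \<in> carrier_mat n m"
    and eigen: "A * X = complex_of_real x \<cdot>\<^sub>m X"
  shows "mfun f A * X = complex_of_real (f x) \<cdot>\<^sub>m X"
proof -
  obtain U l where U: "unitary n U"
    and AU: "A = U * mat_diag n (\<lambda>k. complex_of_real (l k)) * mat_adjoint U"
    and fA: "mfun f A = U * mat_diag n (\<lambda>k. complex_of_real (f (l k))) * mat_adjoint U"
    using mfun_unitary_diagonalization[OF A] by blast
  note U' = unitaryD[OF U]
  define Y where "Y = mat_adjoint U * X"
  have Y: "Y \<in> carrier_mat n m" using U' X by (simp add: Y_def mult_carrier_mat[of _ n n])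
  have "mat_diag n (\<lambda>k. complex_of_real (l k)) * Y = mat_adjoint U * (A * X)"
    using U' X unitary_cancel(1)[OF U, of "mat_diag n (\<lambda>k. complex_of_real (l k)) * Y" m] Y
    unfolding AU Y_def
    by (simp add: assoc_mult_mat[of _ n n _ n _ m] assoc_mult_mat[of _ n n _ n _ n] mult_carrier_mat[of _ n n])
  also have "\<dots> = Y * mat_diag m (\<lambda>_. complex_of_real x)"
    using mult_mat_diag_const[OF Y, of "complex_of_real x"] U' X by (simp add: eigen Y_def mult_smult_distrib[of _ n n _ m])
  finally have "mat_diag n (\<lambda>k. complex_of_real (l k)) * Y = Y * mat_diag m (\<lambda>_. complex_of_real x)" .
  from mat_diag_intertwining_map[OF Y this, of "\<lambda>z. complex_of_real (f (Re z))"]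
  have "mat_diag n (\<lambda>k. complex_of_real (f (l k))) * Y = complex_of_real (f x) \<cdot>\<^sub>m Y"
    by (simp add: mult_mat_diag_const[OF Y])
  moreover have "mfun f A * X = U * (mat_diag n (\<lambda>k. complex_of_real (f (l k))) * Y)"
    unfolding fA Y_def using U' X
    by (simp add: assoc_mult_mat[of _ n n _ n _ m] mult_carrier_mat[of _ n n])
  ultimately show ?thesis
    using unitary_cancel(2)[OF U X] U' Y by (simp add: Y_def mult_smult_distrib[of _ n n _ m])
qed

lemma mfun_carrier:
  assumes "A \<in> carrier_mat n n" "mat_adjoint A = A"
  shows "mfun f A \<in> carrier_mat n n"
proof -
  obtain U l where U: "unitary n U"
    and "mfun f A = U * mat_diag n (\<lambda>k. complex_of_real (f (l k))) * mat_adjoint U"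
    using mfun_unitary_diagonalization[OF assms] by metis
  then show ?thesis using unitaryD(1,2)[OF U] by (simp add: mult_carrier_mat[of _ n n])
qed

section \<open>Real combinations of orthogonal projections\<close>

locale resolution_of_identity =
  fixes n :: nat and I :: "'i set" and P :: "'i \<Rightarrow> complex mat"
  assumes finite_index: "finite I"
    and proj_carrier [simp]: "\<And>i. i \<in> I \<Longrightarrow> P i \<in> carrier_mat n n"
    and proj_adjoint: "\<And>i. i \<in> I \<Longrightarrow> mat_adjoint (P i) = P i"
    and proj_orthogonal: "\<And>i j. i \<in> I \<Longrightarrow> j \<in> I \<Longrightarrow> P i * P j = (if i = j then P i else 0\<^sub>m n n)"
    and proj_sum: "msum n I P = 1\<^sub>m n"
begin

definition proj_comb :: "('i \<Rightarrow> real) \<Rightarrow> complex mat" where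
  "proj_comb c = msum n I (\<lambda>i. complex_of_real (c i) \<cdot>\<^sub>m P i)"

definition proj_rank :: "'i \<Rightarrow> real" where
  "proj_rank i = Re (mtrace (P i))"

lemma proj_dim_row [simp]: "i \<in> I \<Longrightarrow> dim_row (P i) = n"
  and proj_dim_col [simp]: "i \<in> I \<Longrightarrow> dim_col (P i) = n"
  using proj_carrier by blast+

lemma proj_comb_carrier [simp]: "proj_comb c \<in> carrier_mat n n"
  by (simp add: proj_comb_def)

lemma proj_comb_cong: "(\<And>i. i \<in> I \<Longrightarrow> c i = d i) \<Longrightarrow> proj_comb c = proj_comb d"
  unfolding proj_comb_def by (auto intro!: msum_cong)

lemma proj_comb_adjoint: "mat_adjoint (proj_comb c) = proj_comb c"
  unfolding proj_comb_def by (auto simp: mat_adjoint_msum mat_adjoint_smult proj_adjoint intro!: msum_cong)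

lemma proj_comb_diff: "proj_comb c - proj_comb d = proj_comb (\<lambda>i. c i - d i)"
  unfolding proj_comb_def
  by (subst msum_diff) (auto intro!: msum_cong eq_matI simp: left_diff_distrib)

lemma proj_comb_smult: "complex_of_real r \<cdot>\<^sub>m proj_comb c = proj_comb (\<lambda>i. r * c i)"
  unfolding proj_comb_def by (subst msum_smult) (auto intro!: msum_cong eq_matI)

lemma proj_eq_proj_comb: "j \<in> I \<Longrightarrow> P j = proj_comb (\<lambda>i. if i = j then 1 else 0)"
  unfolding proj_comb_def
  by (subst msum_single[symmetric, of I j "P j" n]) (auto simp: finite_index intro!: msum_cong eq_matI)

lemma proj_comb_mult_proj:
  assumes j: "j \<in> I"
  shows "proj_comb c * P j = complex_of_real (c j) \<cdot>\<^sub>m P j"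
proof -
  have "proj_comb c * P j = msum n I (\<lambda>i. complex_of_real (c i) \<cdot>\<^sub>m (P i * P j))"
    unfolding proj_comb_def using j
    by (subst msum_mult_right) (auto intro!: msum_cong simp: mult_smult_assoc_mat[of _ n n _ n])
  also have "\<dots> = msum n I (\<lambda>i. if i = j then complex_of_real (c j) \<cdot>\<^sub>m P j else 0\<^sub>m n n)"
    using j by (intro msum_cong) (auto simp: proj_orthogonal)
  also have "\<dots> = complex_of_real (c j) \<cdot>\<^sub>m P j"
    using j finite_index by (intro msum_single) auto
  finally show ?thesis .
qed

lemma mult_proj_comb:
  assumes "A \<in> carrier_mat n n" "\<And>i. i \<in> I \<Longrightarrow> A * P i = complex_of_real (d i) \<cdot>\<^sub>m P i"
  shows "A * proj_comb c = proj_comb (\<lambda>i. d i * c i)"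
proof -
  have "A * proj_comb c = msum n I (\<lambda>i. complex_of_real (c i) \<cdot>\<^sub>m (A * P i))"
    unfolding proj_comb_def using assms(1)
    by (subst msum_mult_left) (auto intro!: msum_cong simp: mult_smult_distrib[of _ n n _ n])
  also have "\<dots> = proj_comb (\<lambda>i. d i * c i)"
    unfolding proj_comb_def using assms(2) by (intro msum_cong) (auto intro!: eq_matI)
  finally show ?thesis .
qed

lemma proj_comb_mult: "proj_comb c * proj_comb d = proj_comb (\<lambda>i. c i * d i)"
  by (rule mult_proj_comb) (simp_all add: proj_comb_mult_proj)

lemma one_eq_proj_comb: "1\<^sub>m n = proj_comb (\<lambda>_. 1)"
  unfolding proj_comb_def proj_sum[symmetric] by (auto intro!: msum_cong eq_matI)

lemma mfun_proj_comb: "mfun f (proj_comb c) = proj_comb (\<lambda>i. f (c i))"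
proof -
  have "mfun f (proj_comb c) = mfun f (proj_comb c) * proj_comb (\<lambda>_. 1)"
    using right_mult_one_mat[OF mfun_carrier[OF proj_comb_carrier proj_comb_adjoint, of f c]]
    by (simp flip: one_eq_proj_comb)
  also have "\<dots> = proj_comb (\<lambda>i. f (c i) * 1)"
  proof (rule mult_proj_comb)
    show "mfun f (proj_comb c) \<in> carrier_mat n n"
      by (intro mfun_carrier proj_comb_carrier proj_comb_adjoint)
    show "mfun f (proj_comb c) * P i = complex_of_real (f (c i)) \<cdot>\<^sub>m P i" if "i \<in> I" for i
      using that by (intro mfun_mult_eigen[of _ n _ n] proj_comb_carrier proj_comb_adjoint proj_carrier proj_comb_mult_proj)
  qed
  finally show ?thesis by simp
qed

lemma mtrace_proj: "i \<in> I \<Longrightarrow> mtrace (P i) = complex_of_real (proj_rank i)"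
  and proj_rank_eq: "i \<in> I \<Longrightarrow> proj_rank i = (\<Sum>j<n. \<Sum>k<n. (cmod (P i $$ (k,j)))\<^sup>2)"
proof -
  assume i: "i \<in> I"
  then have "mtrace (P i) = complex_of_real (\<Sum>j<n. \<Sum>k<n. (cmod (P i $$ (k,j)))\<^sup>2)"
    using proj_orthogonal[OF i i] proj_adjoint[OF i] mtrace_adjoint_mult_self[OF proj_carrier[OF i]] by simp
  then show "mtrace (P i) = complex_of_real (proj_rank i)"
    and "proj_rank i = (\<Sum>j<n. \<Sum>k<n. (cmod (P i $$ (k,j)))\<^sup>2)"
    by (simp_all add: proj_rank_def)
qed

lemma proj_rank_pos:
  assumes i: "i \<in> I" and "P i \<noteq> 0\<^sub>m n n"
  shows "proj_rank i > 0"
proof -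
  obtain k j where kj: "k < n" "j < n" "P i $$ (k,j) \<noteq> 0"
    using assms by (metis eq_matI index_zero_mat proj_dim_row proj_dim_col)
  have "0 < (cmod (P i $$ (k,j)))\<^sup>2" using kj by simp
  also have "\<dots> \<le> (\<Sum>k<n. (cmod (P i $$ (k,j)))\<^sup>2)"
    using kj by (intro member_le_sum) auto
  also have "\<dots> \<le> proj_rank i"
    unfolding proj_rank_eq[OF i] using kj
    by (intro member_le_sum[where f = "\<lambda>j. \<Sum>k<n. _ j k"]) (auto intro: sum_nonneg)
  finally show ?thesis .
qed

lemma proj_rank_nonneg: "i \<in> I \<Longrightarrow> proj_rank i \<ge> 0"
  by (simp add: proj_rank_eq sum_nonneg)

lemma mtrace_proj_comb: "mtrace (proj_comb c) = complex_of_real (\<Sum>i\<in>I. c i * proj_rank i)"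
  unfolding proj_comb_def
  by (subst mtrace_msum) (auto simp: mtrace_smult[of _ n] mtrace_proj intro!: sum.cong)

lemma proj_comb_normalize:
  "(1 / mtrace (proj_comb w)) \<cdot>\<^sub>m proj_comb w = proj_comb (\<lambda>i. w i / (\<Sum>j\<in>I. w j * proj_rank j))"
proof -
  have trace: "1 / mtrace (proj_comb w) = complex_of_real (1 / (\<Sum>j\<in>I. w j * proj_rank j))"
    by (simp only: mtrace_proj_comb of_real_divide of_real_1)
  show ?thesis
    unfolding trace proj_comb_smult by (intro proj_comb_cong) simp
qed

lemma normalized_proj:
  assumes j: "j \<in> I"
  shows "(1 / mtrace (P j)) \<cdot>\<^sub>m P j = proj_comb (\<lambda>i. if i = j then 1 / proj_rank j else 0)"
proof -
  have "(\<Sum>i\<in>I. (if i = j then 1 else 0) * proj_rank i) = proj_rank j"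
    using finite_index j by (subst sum.remove[OF _ j]) auto
  then show ?thesis
    unfolding proj_eq_proj_comb[OF j] proj_comb_normalize by (intro proj_comb_cong) simp
qed

lemma trace_norm_proj_comb: "trace_norm (proj_comb c) = (\<Sum>i\<in>I. \<bar>c i\<bar> * proj_rank i)"
  unfolding trace_norm_def proj_comb_adjoint proj_comb_mult mfun_proj_comb mtrace_proj_comb
  by (simp add: real_sqrt_mult_self)

lemma fidelity_proj_comb:
  "fidelity (proj_comb a) (proj_comb b) = (\<Sum>i\<in>I. sqrt \<bar>a i * b i\<bar> * proj_rank i)\<^sup>2"
  unfolding fidelity_def mfun_proj_comb proj_comb_mult trace_norm_proj_comb
  by (simp add: abs_mult real_sqrt_mult real_sqrt_abs')

lemma rel_entropy_proj_comb:
  "rel_entropy (proj_comb a) (proj_comb b) = (\<Sum>i\<in>I. a i * (ln (a i) - ln (b i)) * proj_rank i)"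
  unfolding rel_entropy_def mfun_proj_comb proj_comb_diff proj_comb_mult mtrace_proj_comb
  by simp

end

section \<open>Distances to a point mass\<close>

context
  fixes I :: "'i set" and i0 :: 'i and a t :: "'i \<Rightarrow> real"
  assumes finite: "finite I" and i0: "i0 \<in> I" and t_i0: "t i0 > 0"
begin

lemma sum_abs_diff_point_mass:
  assumes nonneg: "\<And>i. i \<in> I \<Longrightarrow> a i \<ge> 0 \<and> t i \<ge> 0"
    and normalized: "(\<Sum>i\<in>I. a i * t i) = 1"
  shows "(\<Sum>i\<in>I. \<bar>a i - (if i = i0 then 1 / t i0 else 0)\<bar> * t i) = 2 * (1 - a i0 * t i0)"
proof -
  have rest: "(\<Sum>i\<in>I - {i0}. a i * t i) = 1 - a i0 * t i0"
    using normalized sum.remove[OF finite i0, of "\<lambda>i. a i * t i"] by simp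
  moreover have "(\<Sum>i\<in>I - {i0}. a i * t i) \<ge> 0"
    using nonneg by (intro sum_nonneg) auto
  moreover have "\<bar>a i0 - 1 / t i0\<bar> * t i0 = \<bar>(a i0 - 1 / t i0) * t i0\<bar>"
    using t_i0 by (simp add: abs_mult)
  moreover have "(a i0 - 1 / t i0) * t i0 = a i0 * t i0 - 1"
    using t_i0 by (simp add: field_simps)
  moreover have "(\<Sum>i\<in>I - {i0}. \<bar>a i - (if i = i0 then 1 / t i0 else 0)\<bar> * t i)
      = (\<Sum>i\<in>I - {i0}. a i * t i)"
    using nonneg by (intro sum.cong) auto
  ultimately show ?thesis
    using sum.remove[OF finite i0, of "\<lambda>i. \<bar>a i - (if i = i0 then 1 / t i0 else 0)\<bar> * t i"] by simp
qed

lemma sum_sqrt_point_mass: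
  assumes "a i0 \<ge> 0"
  shows "(\<Sum>i\<in>I. sqrt \<bar>a i * (if i = i0 then 1 / t i0 else 0)\<bar> * t i) = sqrt (a i0 * t i0)"
proof -
  have "(\<Sum>i\<in>I. sqrt \<bar>a i * (if i = i0 then 1 / t i0 else 0)\<bar> * t i)
      = (\<Sum>i\<in>I. if i = i0 then sqrt (a i0 / t i0) * t i0 else 0)"
    using assms t_i0 by (intro sum.cong) auto
  also have "\<dots> = sqrt (a i0 / t i0) * t i0"
    using finite i0 by simp
  also have "\<dots> = sqrt (a i0 * t i0)"
    using t_i0 by (simp add: real_sqrt_divide real_sqrt_mult field_simps)
  finally show ?thesis .
qed

lemma sum_rel_entropy_point_mass:
  assumes "a i0 > 0"
  shows "(\<Sum>i\<in>I. (if i = i0 then 1 / t i0 else 0) * (ln (if i = i0 then 1 / t i0 else 0) - ln (a i)) * t i)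
    = - ln (a i0 * t i0)"
proof -
  have "(\<Sum>i\<in>I. (if i = i0 then 1 / t i0 else 0) * (ln (if i = i0 then 1 / t i0 else 0) - ln (a i)) * t i)
      = (\<Sum>i\<in>I. if i = i0 then ln (1 / t i0) - ln (a i0) else 0)"
    using t_i0 by (intro sum.cong) auto
  also have "\<dots> = - ln (a i0 * t i0)"
    using finite i0 assms t_i0 by (simp add: ln_mult ln_div)
  finally show ?thesis .
qed

end

theorem corollary4:
  fixes d M :: nat and H :: "complex mat" and lam :: "nat \<Rightarrow> real"
    and P :: "nat \<Rightarrow> complex mat" and \<beta> :: real
  assumes H: "H \<in> carrier_mat d d" "hermitian H"
    and M: "M \<ge> 1"
    and lam_mono: "\<And>i j. 1 \<le> i \<Longrightarrow> i < j \<Longrightarrow> j \<le> M \<Longrightarrow> lam i < lam j"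
    and P_carrier: "\<And>i. i \<in> {1..M} \<Longrightarrow> P i \<in> carrier_mat d d"
    and P_herm: "\<And>i. i \<in> {1..M} \<Longrightarrow> hermitian (P i)"
    and P_nonzero: "\<And>i. i \<in> {1..M} \<Longrightarrow> P i \<noteq> 0\<^sub>m d d"
    and P_orth: "\<And>i j. i \<in> {1..M} \<Longrightarrow> j \<in> {1..M} \<Longrightarrow>
                   P i * P j = (if i = j then P i else 0\<^sub>m d d)"
    and P_sum: "msum d {1..M} P = 1\<^sub>m d"
    and H_decomp: "H = msum d {1..M} (\<lambda>i. complex_of_real (lam i) \<cdot>\<^sub>m P i)"
    and beta: "\<beta> \<ge> 0"
  defines "\<gamma> \<equiv> (1 / mtrace (P 1)) \<cdot>\<^sub>m P 1"
    and "\<tau> \<equiv> (1 / mtrace (mfun (\<lambda>x. exp (- \<beta> * x)) H)) \<cdot>\<^sub>m mfun (\<lambda>x. exp (- \<beta> * x)) H"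
  shows "(1/2) * trace_norm (\<tau> - \<gamma>) = 1 - fidelity \<tau> \<gamma>
       \<and> rel_entropy \<gamma> \<tau> = - ln (fidelity \<tau> \<gamma>)"
proof -
  interpret resolution_of_identity d "{1..M}" P
    using P_carrier P_herm P_orth P_sum by unfold_locales (auto simp: hermitian_def)
  have one: "1 \<in> {1..M}" and rank: "proj_rank 1 > 0" "\<And>i. i \<in> {1..M} \<Longrightarrow> proj_rank i \<ge> 0"
    using M proj_rank_pos P_nonzero proj_rank_nonneg by auto
  define Z where "Z = (\<Sum>i\<in>{1..M}. exp (- \<beta> * lam i) * proj_rank i)"
  define a where "a i = exp (- \<beta> * lam i) / Z" for i
  have "Z > 0" unfolding Z_def using one rank by (intro sum_pos2[OF _ one]) auto
  then have a: "\<And>i. a i > 0" "(\<Sum>i\<in>{1..M}. a i * proj_rank i) = 1"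
    by (auto simp: a_def Z_def sum_divide_distrib[symmetric])
  have tau: "\<tau> = proj_comb a"
    unfolding \<tau>_def H_decomp proj_comb_def[symmetric] mfun_proj_comb proj_comb_normalize a_def Z_def ..
  have gamma: "\<gamma> = proj_comb (\<lambda>i. if i = 1 then 1 / proj_rank 1 else 0)"
    unfolding \<gamma>_def by (rule normalized_proj[OF one])
  have "trace_norm (\<tau> - \<gamma>) = 2 * (1 - a 1 * proj_rank 1)"
    unfolding tau gamma proj_comb_diff trace_norm_proj_comb
    using a rank one by (intro sum_abs_diff_point_mass) (auto intro: less_imp_le)
  moreover have "fidelity \<tau> \<gamma> = a 1 * proj_rank 1"
    unfolding tau gamma fidelity_proj_comb
      sum_sqrt_point_mass[of "{1..M}" 1 proj_rank a, OF finite_index one rank(1) less_imp_le[OF a(1)]]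
    using mult_pos_pos[OF a(1)[of 1] rank(1)] by simp
  moreover have "rel_entropy \<gamma> \<tau> = - ln (a 1 * proj_rank 1)"
    unfolding tau gamma rel_entropy_proj_comb using a(1) rank(1) one by (intro sum_rel_entropy_point_mass) auto
  ultimately show ?thesis by simp
qed

end
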